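(* Fix $h\in[H]$ and $(x_h,a_h)\in\mathcal A(\mathcal X_h)$. Let $(\gamma^t_h(x_h,a_h))_{t\in[T]}$ be positive random variables with $\gamma^t_h(x_h,a_h)$ being $\mathcal F_{t-1}$-measurable, let $\tau$ be a stopping time with respect to $(\mathcal F_t)$ with values in $\{0,\dots,T\}$, and let $\gamma'>0$ be a deterministic constant such that $\gamma^t_h(x_h,a_h)\ge\gamma'$ for all $t\le\tau$. Define $\tilde\ell^t_h(x_h,a_h)=\mathbb 1\{x^t_h=x_h,a^t_h=a_h\}(1-r^t_h)/(\mu^t_{1:h}(x_h,a_h)+\gamma^t_h(x_h,a_h))$, $\tilde L^t_h=\sum_{k\le t}\tilde\ell^k_h$ and $L^t_h(x_h,a_h)=\sum_{k\le t}\ell^{\nu^k}_h(x_h,a_h)$. Then for any $\delta'\in(0,1)$, with probability at least $1-\delta'$, $$\tilde L^\tau_h(x_h,a_h)-L^\tau_h(x_h,a_h)\le\frac{\log(1/\delta')}{2\gamma'}.$$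
   Context: Setting: an episodic imperfect-information game with horizon $H$ and perfect recall for the max-player, whose information sets are $\mathcal X=\bigsqcup_h\mathcal X_h$ with action sets $\mathcal A(x)$; $\mathcal A(\mathcal X_h)=\{(x_h,a_h):x_h\in\mathcal X_h,a_h\in\mathcal A(x_h)\}$. For a max-player policy $\mu$, $\mu_{1:h}(x_h,a_h)=\prod_{h'\le h}\mu_{h'}(a_{h'}|x_{h'})$ along the unique history of $(x_h,a_h)$. For a min-player policy $\nu$, $\ell^\nu_h(x_h,a_h)=p^\nu_{1:h}(x_h)(1-r^\nu_h(x_h,a_h))$, where $p^\nu_{1:h}(x_h)$ is the induced reach probability of $x_h$ (for the actions in its history) and $r^\nu_h\in[0,1]$ the expected reward. Over $T$ episodes, the max-player's policy $\mu^t$ and opponent's policy $\nu^t$ are $\mathcal F_{t-1}$-measurable, where $\mathcal F_0$ is trivial and $\mathcal F_t$ is generated by $\nu^1,\dots,\nu^{t+1}$ and all observations (information sets $x^k_h$, actions $a^k_h$, rewards $r^k_h\in[0,1]$) of episodes $k\le t$; conditionally on $\mathcal F_{t-1}$, $\mathbb E[\mathbb 1\{x^t_h=x_h,a^t_h=a_h\}(1-r^t_h)\mid\mathcal F_{t-1}]=\mu^t_{1:h}(x_h,a_h)\ell^{\nu^t}_h(x_h,a_h)$. *)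

theory Defs
  imports "HOL-Probability.Probability"
begin

text \<open>Quantities attached to a fixed pair (x_h,a_h) at a fixed step h.
  X t w : indicator 1{x^t_h = x_h, a^t_h = a_h} of episode t,
  r t w : reward r^t_h of episode t,
  mu t w : mu^t_{1:h}(x_h,a_h),
  ell t w : ell^{nu^t}_h(x_h,a_h),
  gam t w : gamma^t_h(x_h,a_h).\<close>

definition loss_est ::
  "(nat \<Rightarrow> 'a \<Rightarrow> real) \<Rightarrow> (nat \<Rightarrow> 'a \<Rightarrow> real) \<Rightarrow> (nat \<Rightarrow> 'a \<Rightarrow> real) \<Rightarrow> (nat \<Rightarrow> 'a \<Rightarrow> real)
    \<Rightarrow> nat \<Rightarrow> 'a \<Rightarrow> real" where
  "loss_est X r mu gam t w = X t w * (1 - r t w) / (mu t w + gam t w)"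

definition cum_loss_est ::
  "(nat \<Rightarrow> 'a \<Rightarrow> real) \<Rightarrow> (nat \<Rightarrow> 'a \<Rightarrow> real) \<Rightarrow> (nat \<Rightarrow> 'a \<Rightarrow> real) \<Rightarrow> (nat \<Rightarrow> 'a \<Rightarrow> real)
    \<Rightarrow> nat \<Rightarrow> 'a \<Rightarrow> real" where
  "cum_loss_est X r mu gam t w = (\<Sum>k\<in>{1..t}. loss_est X r mu gam k w)"

definition cum_loss :: "(nat \<Rightarrow> 'a \<Rightarrow> real) \<Rightarrow> nat \<Rightarrow> 'a \<Rightarrow> real" where
  "cum_loss ell t w = (\<Sum>k\<in>{1..t}. ell k w)"

end

theory Submission
  imports Defs
begin

text \<open>Let \<open>S t\<close> be the stopped excess, the sum of \<open>\<tilde>\<ell>\<^sup>k - \<ell>\<^sup>k\<close> over \<open>k \<le> min t \<tau>\<close>.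
  Then \<open>exp (2\<gamma>' S t)\<close> is a supermartingale: before \<open>\<tau>\<close> we have \<open>2\<gamma>' \<tilde>\<ell>\<^sup>k \<le> b Z\<close> with
  \<open>b = 2\<gamma>' / (\<mu>\<^sup>k + \<gamma>')\<close> and \<open>Z = 1{x\<^sup>k = x, a\<^sup>k = a} (1 - r\<^sup>k) \<in> [0,1]\<close>, so by convexity of \<open>exp\<close>
  \<open>E[exp (2\<gamma>' \<tilde>\<ell>\<^sup>k) | F (k - 1)] \<le> 1 + (e\<^sup>b - 1) \<mu>\<^sup>k \<ell>\<^sup>k \<le> 1 + 2\<gamma>' \<ell>\<^sup>k \<le> exp (2\<gamma>' \<ell>\<^sup>k)\<close>,
  the middle step being \<open>ln (1 + z) \<ge> 2z / (2 + z)\<close>. Markov's inequality for \<open>exp (2\<gamma>' S T)\<close>,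
  whose mean is at most 1, gives the bound.\<close>

lemma two_mult_div_le_ln_one_plus:
  fixes z :: real
  assumes "0 \<le> z"
  shows "2 * z / (2 + z) \<le> ln (1 + z)"
proof -
  let ?f = "\<lambda>z. ln (1 + z) - 2 * z / (2 + z)"
  have "?f 0 \<le> ?f z"
  proof (rule DERIV_nonneg_imp_nondecreasing[OF assms])
    fix x :: real
    assume "0 \<le> x"
    then have "(?f has_real_derivative (1 / (1 + x) - 4 / (2 + x)^2)) (at x)"
      by (auto intro!: derivative_eq_intros simp: field_simps power2_eq_square)
    moreover have "4 / (2 + x)^2 \<le> 1 / (1 + x)"
      using \<open>0 \<le> x\<close> by (simp add: divide_simps power2_eq_square algebra_simps)
    ultimately show "\<exists>y. (?f has_real_derivative y) (at x) \<and> 0 \<le> y"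
      by auto
  qed
  then show ?thesis
    by simp
qed

lemma exp_mult_le_chord:
  fixes b z :: real
  assumes "0 \<le> z" "z \<le> 1"
  shows "exp (b * z) \<le> 1 + (exp b - 1) * z"
proof -
  have "exp ((1 - z) *\<^sub>R 0 + z *\<^sub>R b) \<le> (1 - z) * exp 0 + z * exp b"
    by (rule convex_onD[OF exp_convex]) (use assms in auto)
  then show ?thesis
    by (simp add: algebra_simps)
qed

lemma exp_two_div_minus_one_mult_le:
  fixes m g :: real
  assumes "0 \<le> m" "0 < g"
  shows "(exp (2 * g / (m + g)) - 1) * m \<le> 2 * g"
proof (cases "m = 0")
  case True
  then show ?thesis
    using assms by simp
next
  case False
  with assms have m: "0 < m"
    by simp
  define z where "z = 2 * g / m"
  have z: "0 \<le> z"
    using m assms by (simp add: z_def)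
  have "2 * g / (m + g) = 2 * z / (2 + z)"
    using m assms by (simp add: z_def field_simps)
  also have "\<dots> \<le> ln (1 + z)"
    by (rule two_mult_div_le_ln_one_plus[OF z])
  finally have "exp (2 * g / (m + g)) \<le> 1 + z"
    using z by (simp add: ln_ge_iff)
  then have "(exp (2 * g / (m + g)) - 1) * m \<le> z * m"
    using m by (intro mult_right_mono) auto
  also have "z * m = 2 * g"
    using m by (simp add: z_def)
  finally show ?thesis .
qed

lemma exp_importance_weighted_increment_le:
  fixes z m g l \<gamma> :: real
  assumes "0 \<le> z" "z \<le> 1" "0 \<le> m" "0 < \<gamma>" "\<gamma> \<le> g"
  shows "exp (2 * \<gamma> * (z / (m + g) - l)) \<le> exp (- (2 * \<gamma> * l)) * (1 + (exp (2 * \<gamma> / (m + \<gamma>)) - 1) * z)"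
proof -
  have "z / (m + g) \<le> z / (m + \<gamma>)"
    using assms by (intro divide_left_mono) auto
  then have "2 * \<gamma> * (z / (m + g)) \<le> (2 * \<gamma> / (m + \<gamma>)) * z"
    using assms mult_left_mono[of _ _ "2 * \<gamma>"] by fastforce
  then have "exp (2 * \<gamma> * (z / (m + g))) \<le> exp ((2 * \<gamma> / (m + \<gamma>)) * z)"
    by simp
  also have "\<dots> \<le> 1 + (exp (2 * \<gamma> / (m + \<gamma>)) - 1) * z"
    using assms by (intro exp_mult_le_chord)
  finally have "exp (- (2 * \<gamma> * l)) * exp (2 * \<gamma> * (z / (m + g)))
      \<le> exp (- (2 * \<gamma> * l)) * (1 + (exp (2 * \<gamma> / (m + \<gamma>)) - 1) * z)"
    by simp
  then show ?thesis
    by (simp add: exp_add[symmetric] algebra_simps)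
qed

lemma exp_compensated_mean_le_one:
  fixes m l \<gamma> :: real
  assumes "0 \<le> m" "0 \<le> l" "0 < \<gamma>"
  shows "exp (- (2 * \<gamma> * l)) * (1 + (exp (2 * \<gamma> / (m + \<gamma>)) - 1) * (m * l)) \<le> 1"
proof -
  have "(exp (2 * \<gamma> / (m + \<gamma>)) - 1) * m * l \<le> 2 * \<gamma> * l"
    using exp_two_div_minus_one_mult_le[OF assms(1,3)] assms(2) by (rule mult_right_mono)
  also have "1 + 2 * \<gamma> * l \<le> exp (2 * \<gamma> * l)"
    by (rule exp_ge_add_one_self)
  finally show ?thesis
    by (simp add: exp_minus field_simps mult.assoc)
qed

lemma (in sigma_finite_subalgebra) integral_le_by_cond_exp:
  fixes Y Y' A B Z :: "'a \<Rightarrow> real"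
  assumes [measurable]: "A \<in> borel_measurable F" "B \<in> borel_measurable F" "Z \<in> borel_measurable M"
    and int: "integrable M Y'" "integrable M Y" "integrable M A" "integrable M (\<lambda>w. B w * Z w)"
    and dominated: "AE w in M. Y' w \<le> A w + B w * Z w"
    and compensated: "AE w in M. A w + B w * real_cond_exp M F Z w \<le> Y w"
  shows "(\<integral>w. Y' w \<partial>M) \<le> (\<integral>w. Y w \<partial>M)"
proof -
  note cond = real_cond_exp_intg[OF int(4) assms(2,3)]
  have "(\<integral>w. Y' w \<partial>M) \<le> (\<integral>w. A w + B w * Z w \<partial>M)"
    using int dominated by (intro integral_mono_AE) auto
  also have "\<dots> = (\<integral>w. A w + B w * real_cond_exp M F Z w \<partial>M)"
    using int cond by simp
  also have "\<dots> \<le> (\<integral>w. Y w \<partial>M)"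
    using int cond compensated by (intro integral_mono_AE) auto
  finally show ?thesis .
qed

lemma integrable_mult_bounded_right:
  fixes f g :: "'a \<Rightarrow> real"
  assumes f: "integrable M f" and g: "g \<in> borel_measurable M" and bound: "\<And>w. w \<in> space M \<Longrightarrow> \<bar>g w\<bar> \<le> c"
  shows "integrable M (\<lambda>w. f w * g w)"
proof (rule Bochner_Integration.integrable_bound[OF integrable_mult_right[OF f, of c]])
  show "(\<lambda>w. f w * g w) \<in> borel_measurable M"
    using borel_measurable_integrable[OF f] g by measurable
  have "\<bar>f w * g w\<bar> \<le> \<bar>c * f w\<bar>" if "w \<in> space M" for w
  proof -
    have "\<bar>f w\<bar> * \<bar>g w\<bar> \<le> \<bar>f w\<bar> * c"
      using bound[OF that] by (intro mult_left_mono) auto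
    moreover have "0 \<le> c"
      using abs_ge_zero[of "g w"] bound[OF that] by linarith
    ultimately show ?thesis
      by (simp add: abs_mult mult.commute)
  qed
  then show "AE w in M. norm (f w * g w) \<le> norm (c * f w)"
    by (intro AE_I2) simp
qed

lemma stopping_time_pred_le:
  fixes \<tau> :: "'a \<Rightarrow> nat"
  assumes "stopping_time F \<tau>" "0 < k"
  shows "Measurable.pred (F (k - 1)) (\<lambda>w. k \<le> \<tau> w)"
proof -
  have "(\<lambda>w. k \<le> \<tau> w) = (\<lambda>w. k - 1 < \<tau> w)"
    using assms(2) by auto
  then show ?thesis
    using stopping_timeD2[OF assms(1), of "k - 1"] by simp
qed

lemma (in filtration) measurable_F_mono: "i \<le> j \<Longrightarrow> f \<in> F i \<rightarrow>\<^sub>M N \<Longrightarrow> f \<in> F j \<rightarrow>\<^sub>M N"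
  using sets_F_mono[of i j] space_F[of i] space_F[of j] by (auto simp: measurable_def)

locale stopped_loss_estimation = prob_space M + filtration "space M" F
  for M :: "'a measure" and F :: "nat \<Rightarrow> 'a measure" +
  fixes T :: nat and \<tau> :: "'a \<Rightarrow> nat"
    and X r mu ell gam :: "nat \<Rightarrow> 'a \<Rightarrow> real"
    and \<gamma> :: real
  assumes subalg: "\<And>t. subalgebra M (F t)"
    and X_meas: "\<And>t. t \<in> {1..T} \<Longrightarrow> X t \<in> borel_measurable (F t)"
    and X_ind: "\<And>t w. t \<in> {1..T} \<Longrightarrow> w \<in> space M \<Longrightarrow> X t w \<in> {0, 1}"
    and r_meas: "\<And>t. t \<in> {1..T} \<Longrightarrow> r t \<in> borel_measurable (F t)"
    and r_range: "\<And>t w. t \<in> {1..T} \<Longrightarrow> w \<in> space M \<Longrightarrow> 0 \<le> r t w \<and> r t w \<le> 1"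
    and mu_meas: "\<And>t. t \<in> {1..T} \<Longrightarrow> mu t \<in> borel_measurable (F (t - 1))"
    and mu_range: "\<And>t w. t \<in> {1..T} \<Longrightarrow> w \<in> space M \<Longrightarrow> 0 \<le> mu t w \<and> mu t w \<le> 1"
    and ell_meas: "\<And>t. t \<in> {1..T} \<Longrightarrow> ell t \<in> borel_measurable (F (t - 1))"
    and ell_range: "\<And>t w. t \<in> {1..T} \<Longrightarrow> w \<in> space M \<Longrightarrow> 0 \<le> ell t w \<and> ell t w \<le> 1"
    and cond_exp: "\<And>t. t \<in> {1..T} \<Longrightarrow>
       AE w in M. real_cond_exp M (F (t - 1)) (\<lambda>w. X t w * (1 - r t w)) w = mu t w * ell t w"
    and gam_meas: "\<And>t. t \<in> {1..T} \<Longrightarrow> gam t \<in> borel_measurable (F (t - 1))"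
    and stop: "stopping_time F \<tau>"
    and \<tau>_range: "\<And>w. w \<in> space M \<Longrightarrow> \<tau> w \<le> T"
    and \<gamma>_pos: "\<gamma> > 0"
    and gam_lower: "AE w in M. \<forall>t\<in>{1..\<tau> w}. \<gamma> \<le> gam t w"
begin

definition stopped_increment :: "nat \<Rightarrow> 'a \<Rightarrow> real" where
  "stopped_increment k w = (if k \<le> \<tau> w then loss_est X r mu gam k w - ell k w else 0)"

definition excess :: "nat \<Rightarrow> 'a \<Rightarrow> real" where
  "excess t w = (\<Sum>k\<in>{1..t}. stopped_increment k w)"

definition exp_excess :: "nat \<Rightarrow> 'a \<Rightarrow> real" where
  "exp_excess t w = exp (2 * \<gamma> * excess t w)"

text \<open>Given \<open>F\<^sub>k\<^sub>-\<^sub>1\<close>, the factor \<open>exp (2\<gamma> \<cdot> stopped_increment k)\<close> is dominated by the affine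
  function \<open>discount k + loss_weight k \<cdot> Z\<close> of the observed \<open>Z = X k (1 - r k)\<close>.\<close>

definition discount :: "nat \<Rightarrow> 'a \<Rightarrow> real" where
  "discount k w = (if k \<le> \<tau> w then exp (- (2 * \<gamma> * ell k w)) else 1)"

definition loss_weight :: "nat \<Rightarrow> 'a \<Rightarrow> real" where
  "loss_weight k w =
    (if k \<le> \<tau> w then exp (- (2 * \<gamma> * ell k w)) * (exp (2 * \<gamma> / (mu k w + \<gamma>)) - 1) else 0)"

lemma borel_measurable_stopped_increment:
  assumes "k \<in> {1..T}"
  shows "stopped_increment k \<in> borel_measurable (F k)"
proof -
  note mono = measurable_F_mono[OF diff_le_self[of k 1]]
  have [measurable]: "Measurable.pred (F k) (\<lambda>w. k \<le> \<tau> w)"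
    "mu k \<in> borel_measurable (F k)" "gam k \<in> borel_measurable (F k)"
    "ell k \<in> borel_measurable (F k)"
    using mono[OF stopping_time_pred_le[OF stop, of k]] mono[OF mu_meas[OF assms]]
      mono[OF gam_meas[OF assms]] mono[OF ell_meas[OF assms]] assms by auto
  have [measurable]: "X k \<in> borel_measurable (F k)" "r k \<in> borel_measurable (F k)"
    using X_meas[OF assms] r_meas[OF assms] .
  show ?thesis
    unfolding stopped_increment_def loss_est_def by measurable
qed

lemma borel_measurable_discount_loss_weight:
  assumes "k \<in> {1..T}"
  shows "discount k \<in> borel_measurable (F (k - 1))" "loss_weight k \<in> borel_measurable (F (k - 1))"
proof -
  define s where "s = k - 1"
  have [measurable]: "Measurable.pred (F s) (\<lambda>w. k \<le> \<tau> w)"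
    "mu k \<in> borel_measurable (F s)" "ell k \<in> borel_measurable (F s)"
    unfolding s_def using stopping_time_pred_le[OF stop, of k] mu_meas[OF assms] ell_meas[OF assms] assms
    by auto
  have "discount k \<in> borel_measurable (F s)" "loss_weight k \<in> borel_measurable (F s)"
    unfolding discount_def loss_weight_def by measurable
  then show "discount k \<in> borel_measurable (F (k - 1))" "loss_weight k \<in> borel_measurable (F (k - 1))"
    by (simp_all add: s_def)
qed

lemma borel_measurable_exp_excess:
  assumes "t \<le> T"
  shows "exp_excess t \<in> borel_measurable (F t)"
proof -
  have "excess t \<in> borel_measurable (F t)"
    unfolding excess_def using assms
    by (intro borel_measurable_sum measurable_F_mono[OF _ borel_measurable_stopped_increment]) auto
  then show ?thesis
    unfolding exp_excess_def by measurable
qed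

lemma exp_excess_Suc: "exp_excess (Suc s) w = exp_excess s w * exp (2 * \<gamma> * stopped_increment (Suc s) w)"
  by (simp add: exp_excess_def excess_def distrib_left exp_add)

lemma exp_excess_pos: "0 < exp_excess t w"
  by (simp add: exp_excess_def)

lemma loss_numerator_range:
  assumes "k \<in> {1..T}" "w \<in> space M"
  shows "0 \<le> X k w * (1 - r k w) \<and> X k w * (1 - r k w) \<le> 1"
  using X_ind[OF assms] r_range[OF assms] by auto

lemma discount_loss_weight_range:
  assumes "k \<in> {1..T}" "w \<in> space M"
  shows "0 \<le> discount k w \<and> discount k w \<le> 1" "0 \<le> loss_weight k w \<and> loss_weight k w \<le> exp 2"
proof -
  have discount_le: "exp (- (2 * \<gamma> * ell k w)) \<le> 1"
    using ell_range[OF assms] \<gamma>_pos by simp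
  have "2 * \<gamma> / (mu k w + \<gamma>) \<le> 2"
    using mu_range[OF assms] \<gamma>_pos by (simp add: divide_le_eq)
  then have "exp (2 * \<gamma> / (mu k w + \<gamma>)) - 1 \<le> exp 2"
    using exp_le_cancel_iff[of "2 * \<gamma> / (mu k w + \<gamma>)" 2] by linarith
  moreover have one_le: "1 \<le> exp (2 * \<gamma> / (mu k w + \<gamma>))"
    using mu_range[OF assms] \<gamma>_pos by simp
  ultimately have "exp (- (2 * \<gamma> * ell k w)) * (exp (2 * \<gamma> / (mu k w + \<gamma>)) - 1) \<le> 1 * exp 2"
    by (intro mult_mono[OF discount_le]) simp_all
  with one_le discount_le
  show "0 \<le> discount k w \<and> discount k w \<le> 1" "0 \<le> loss_weight k w \<and> loss_weight k w \<le> exp 2"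
    by (auto simp: discount_def loss_weight_def)
qed

lemma AE_exp_stopped_increment_le:
  "AE w in M. \<forall>k\<in>{1..T}.
    exp (2 * \<gamma> * stopped_increment k w) \<le> discount k w + loss_weight k w * (X k w * (1 - r k w))"
  using gam_lower AE_space
proof eventually_elim
  case (elim w)
  show ?case
  proof
    fix k
    assume k: "k \<in> {1..T}"
    show "exp (2 * \<gamma> * stopped_increment k w) \<le> discount k w + loss_weight k w * (X k w * (1 - r k w))"
    proof (cases "k \<le> \<tau> w")
      case True
      with elim k have "\<gamma> \<le> gam k w"
        by auto
      then have "exp (2 * \<gamma> * (X k w * (1 - r k w) / (mu k w + gam k w) - ell k w))
          \<le> exp (- (2 * \<gamma> * ell k w)) * (1 + (exp (2 * \<gamma> / (mu k w + \<gamma>)) - 1) * (X k w * (1 - r k w)))"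
        using loss_numerator_range[OF k elim(2)] mu_range[OF k elim(2)] \<gamma>_pos
        by (intro exp_importance_weighted_increment_le) auto
      with True show ?thesis
        by (simp add: stopped_increment_def loss_est_def discount_def loss_weight_def distrib_left mult.assoc)
    qed (simp add: stopped_increment_def discount_def loss_weight_def)
  qed
qed

lemma discount_add_loss_weight_mean_le_one:
  assumes "k \<in> {1..T}" "w \<in> space M"
  shows "discount k w + loss_weight k w * (mu k w * ell k w) \<le> 1"
proof (cases "k \<le> \<tau> w")
  case True
  have "exp (- (2 * \<gamma> * ell k w)) * (1 + (exp (2 * \<gamma> / (mu k w + \<gamma>)) - 1) * (mu k w * ell k w)) \<le> 1"
    using mu_range[OF assms] ell_range[OF assms] \<gamma>_pos by (intro exp_compensated_mean_le_one) auto
  with True show ?thesis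
    by (simp add: discount_def loss_weight_def distrib_left mult.assoc)
qed (simp add: discount_def loss_weight_def)

lemma AE_discount_add_loss_weight_cond_exp_le_one:
  assumes "k \<in> {1..T}"
  shows "AE w in M. discount k w + loss_weight k w * real_cond_exp M (F (k - 1)) (\<lambda>w. X k w * (1 - r k w)) w \<le> 1"
  using cond_exp[OF assms] AE_space
  by eventually_elim (simp add: discount_add_loss_weight_mean_le_one[OF assms])

lemma abs_loss_weight_mult_numerator_le:
  assumes "k \<in> {1..T}" "w \<in> space M"
  shows "\<bar>loss_weight k w * (X k w * (1 - r k w))\<bar> \<le> exp 2"
proof -
  note Z = loss_numerator_range[OF assms]
  then have "loss_weight k w * (X k w * (1 - r k w)) \<le> exp 2 * 1"
    using discount_loss_weight_range(2)[OF assms] by (intro mult_mono) auto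
  with Z show ?thesis
    using discount_loss_weight_range(2)[OF assms] by simp
qed

lemma AE_exp_excess_Suc_le:
  assumes "Suc s \<le> T"
  shows "AE w in M. exp_excess (Suc s) w
    \<le> exp_excess s w * (discount (Suc s) w + loss_weight (Suc s) w * (X (Suc s) w * (1 - r (Suc s) w)))"
  using AE_exp_stopped_increment_le
proof eventually_elim
  case (elim w)
  then show ?case
    using assms exp_excess_pos[of s w] by (auto simp: exp_excess_Suc intro!: mult_left_mono)
qed

lemma AE_stopped_increment_le: "AE w in M. \<forall>k\<in>{1..T}. stopped_increment k w \<le> 1 / \<gamma>"
  using gam_lower AE_space
proof eventually_elim
  case (elim w)
  show ?case
  proof
    fix k
    assume k: "k \<in> {1..T}"
    show "stopped_increment k w \<le> 1 / \<gamma>"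
    proof (cases "k \<le> \<tau> w")
      case True
      with elim k have "\<gamma> \<le> gam k w"
        by auto
      then have "loss_est X r mu gam k w \<le> 1 / \<gamma>"
        unfolding loss_est_def using loss_numerator_range[OF k elim(2)] mu_range[OF k elim(2)] \<gamma>_pos
        by (intro frac_le) auto
      then show ?thesis
        using True ell_range[OF k elim(2)] by (simp add: stopped_increment_def)
    qed (use \<gamma>_pos in \<open>simp add: stopped_increment_def\<close>)
  qed
qed

lemma integrable_exp_excess:
  assumes "t \<le> T"
  shows "integrable M (exp_excess t)"
proof (rule integrable_const_bound[where B = "exp (2 * real t)"])
  show "AE w in M. norm (exp_excess t w) \<le> exp (2 * real t)"
    using AE_stopped_increment_le
  proof eventually_elim
    case (elim w)
    have "excess t w \<le> (\<Sum>k\<in>{1..t}. 1 / \<gamma>)"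
      unfolding excess_def using elim assms by (intro sum_mono) auto
    then have "2 * \<gamma> * excess t w \<le> 2 * real t"
      using \<gamma>_pos mult_left_mono[of _ _ "2 * \<gamma>"] by fastforce
    then show ?case
      using exp_excess_pos[of t w] by (simp add: exp_excess_def)
  qed
  show "exp_excess t \<in> borel_measurable M"
    using measurable_from_subalg[OF subalg borel_measurable_exp_excess[OF assms]] .
qed

lemma excess_eq_cum_loss_diff:
  assumes "w \<in> space M"
  shows "excess T w = cum_loss_est X r mu gam (\<tau> w) w - cum_loss ell (\<tau> w) w"
proof -
  have "excess T w = (\<Sum>k\<in>{k\<in>{1..T}. k \<le> \<tau> w}. loss_est X r mu gam k w - ell k w)"
    unfolding excess_def stopped_increment_def by (rule sum.inter_filter[symmetric]) simp
  also have "{k\<in>{1..T}. k \<le> \<tau> w} = {1..\<tau> w}"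
    using \<tau>_range[OF assms] by auto
  finally show ?thesis
    by (simp add: cum_loss_est_def cum_loss_def sum_subtractf)
qed

lemma integral_exp_excess_Suc_le:
  assumes "Suc s \<le> T"
  shows "(\<integral>w. exp_excess (Suc s) w \<partial>M) \<le> (\<integral>w. exp_excess s w \<partial>M)"
proof -
  define k where "k = Suc s"
  have k: "k \<in> {1..T}" and s: "s = k - 1"
    using assms by (simp_all add: k_def)
  interpret Fs: sigma_finite_subalgebra M "F s"
    by (intro finite_measure_subalgebra_is_sigma_finite)
      (simp add: finite_measure_subalgebra_def finite_measure_subalgebra_axioms_def subalg finite_measure_axioms)
  define A where "A w = exp_excess s w * discount k w" for w
  define B where "B w = exp_excess s w * loss_weight k w" for w
  define Z where "Z = (\<lambda>w. X k w * (1 - r k w))"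
  have [measurable]: "exp_excess s \<in> borel_measurable (F s)"
    using borel_measurable_exp_excess assms by simp
  note [measurable] = borel_measurable_discount_loss_weight[OF k, folded s]
  have A_meas: "A \<in> borel_measurable (F s)" and B_meas: "B \<in> borel_measurable (F s)"
    unfolding A_def B_def by measurable
  have Z_meas [measurable]: "Z \<in> borel_measurable M"
    unfolding Z_def using measurable_from_subalg[OF subalg X_meas[OF k]] measurable_from_subalg[OF subalg r_meas[OF k]]
    by measurable
  have int_s: "integrable M (exp_excess s)"
    using assms by (intro integrable_exp_excess) simp
  have [measurable]: "discount k \<in> borel_measurable M" "loss_weight k \<in> borel_measurable M"
    using borel_measurable_discount_loss_weight[OF k] by (auto intro: measurable_from_subalg[OF subalg])
  have int_A: "integrable M A"
    unfolding A_def using discount_loss_weight_range(1)[OF k]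
    by (intro integrable_mult_bounded_right[OF int_s, where c = 1]) auto
  have "\<bar>loss_weight k w * Z w\<bar> \<le> exp 2" if "w \<in> space M" for w
    using abs_loss_weight_mult_numerator_le[OF k that] by (simp add: Z_def)
  then have int_BZ: "integrable M (\<lambda>w. B w * Z w)"
    unfolding B_def mult.assoc by (intro integrable_mult_bounded_right[OF int_s]) auto
  have "AE w in M. exp_excess (Suc s) w \<le> A w + B w * Z w"
    using AE_exp_excess_Suc_le[OF assms] by (simp add: A_def B_def Z_def k_def algebra_simps)
  moreover have "AE w in M. A w + B w * real_cond_exp M (F s) Z w \<le> exp_excess s w"
    using AE_discount_add_loss_weight_cond_exp_le_one[OF k]
  proof eventually_elim
    case (elim w)
    then have "exp_excess s w * (discount k w + loss_weight k w * real_cond_exp M (F s) Z w) \<le> exp_excess s w * 1"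
      using exp_excess_pos[of s w] by (intro mult_left_mono) (auto simp: Z_def s)
    then show ?case
      by (simp add: A_def B_def algebra_simps)
  qed
  ultimately show ?thesis
    using Fs.integral_le_by_cond_exp[OF A_meas B_meas Z_meas integrable_exp_excess int_s int_A int_BZ] assms
    by simp
qed

lemma integral_exp_excess_le_one:
  "t \<le> T \<Longrightarrow> (\<integral>w. exp_excess t w \<partial>M) \<le> 1"
proof (induction t)
  case 0
  then show ?case
    by (simp add: exp_excess_def excess_def prob_space)
next
  case (Suc s)
  then show ?case
    using integral_exp_excess_Suc_le[of s] by simp
qed

lemma prob_excess_le:
  assumes "0 < \<delta>"
  shows "measure M {w \<in> space M. excess T w \<le> ln (1 / \<delta>) / (2 * \<gamma>)} \<ge> 1 - \<delta>"
proof -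
  define B where "B = {w \<in> space M. ln (1 / \<delta>) / (2 * \<gamma>) < excess T w}"
  have [measurable]: "exp_excess T \<in> borel_measurable M"
    using measurable_from_subalg[OF subalg borel_measurable_exp_excess[of T]] by simp
  have "exp (2 * \<gamma> * (ln (1 / \<delta>) / (2 * \<gamma>))) = 1 / \<delta>"
    using assms \<gamma>_pos by simp
  then have B_eq: "B = {w \<in> space M. 1 / \<delta> < exp_excess T w}"
    unfolding B_def exp_excess_def using \<gamma>_pos
    by (metis (no_types, lifting) exp_less_cancel_iff mult_less_cancel_left_pos zero_less_mult_iff zero_less_numeral)
  have "measure M B \<le> measure M {w \<in> space M. 1 / \<delta> \<le> exp_excess T w}"
    unfolding B_eq by (intro finite_measure_mono) auto
  also have "\<dots> \<le> (\<integral>w. exp_excess T w \<partial>M) / (1 / \<delta>)"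
    using assms exp_excess_pos
    by (intro integral_Markov_inequality_measure[OF integrable_exp_excess]) (auto simp: less_imp_le)
  also have "\<dots> \<le> \<delta>"
    using integral_exp_excess_le_one[of T] assms by (simp add: divide_le_eq)
  finally have "measure M B \<le> \<delta>" .
  moreover have "B \<in> sets M"
    unfolding B_eq by measurable
  moreover have "space M - B = {w \<in> space M. excess T w \<le> ln (1 / \<delta>) / (2 * \<gamma>)}"
    by (auto simp: B_def)
  ultimately show ?thesis
    using prob_compl[of B] by simp
qed

end

theorem mainTheorem5:
  fixes M :: "'a measure" and F :: "nat \<Rightarrow> 'a measure"
    and T :: nat and \<tau> :: "'a \<Rightarrow> nat"
    and X r mu ell gam :: "nat \<Rightarrow> 'a \<Rightarrow> real"
    and \<gamma>' \<delta>' :: real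
  assumes prob: "prob_space M"
    and filt: "filtration (space M) F"
    and subalg: "\<And>t. subalgebra M (F t)"
    and F0: "sets (F 0) = {{}, space M}"
    and X_meas: "\<And>t. t \<in> {1..T} \<Longrightarrow> X t \<in> borel_measurable (F t)"
    and X_ind: "\<And>t w. t \<in> {1..T} \<Longrightarrow> w \<in> space M \<Longrightarrow> X t w \<in> {0, 1}"
    and r_meas: "\<And>t. t \<in> {1..T} \<Longrightarrow> r t \<in> borel_measurable (F t)"
    and r_range: "\<And>t w. t \<in> {1..T} \<Longrightarrow> w \<in> space M \<Longrightarrow> 0 \<le> r t w \<and> r t w \<le> 1"
    and mu_meas: "\<And>t. t \<in> {1..T} \<Longrightarrow> mu t \<in> borel_measurable (F (t - 1))"
    and mu_range: "\<And>t w. t \<in> {1..T} \<Longrightarrow> w \<in> space M \<Longrightarrow> 0 \<le> mu t w \<and> mu t w \<le> 1"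
    and ell_meas: "\<And>t. t \<in> {1..T} \<Longrightarrow> ell t \<in> borel_measurable (F (t - 1))"
    and ell_range: "\<And>t w. t \<in> {1..T} \<Longrightarrow> w \<in> space M \<Longrightarrow> 0 \<le> ell t w \<and> ell t w \<le> 1"
    and cond_exp: "\<And>t. t \<in> {1..T} \<Longrightarrow>
       AE w in M. real_cond_exp M (F (t - 1)) (\<lambda>w. X t w * (1 - r t w)) w = mu t w * ell t w"
    and gam_meas: "\<And>t. t \<in> {1..T} \<Longrightarrow> gam t \<in> borel_measurable (F (t - 1))"
    and gam_pos: "\<And>t w. t \<in> {1..T} \<Longrightarrow> w \<in> space M \<Longrightarrow> gam t w > 0"
    and stop: "stopping_time F \<tau>"
    and \<tau>_range: "\<And>w. w \<in> space M \<Longrightarrow> \<tau> w \<le> T"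
    and \<gamma>'_pos: "\<gamma>' > 0"
    and gam_lower: "AE w in M. \<forall>t\<in>{1..\<tau> w}. \<gamma>' \<le> gam t w"
    and \<delta>': "0 < \<delta>'" "\<delta>' < 1"
  shows "measure M {w \<in> space M.
           cum_loss_est X r mu gam (\<tau> w) w - cum_loss ell (\<tau> w) w \<le> ln (1 / \<delta>') / (2 * \<gamma>')}
         \<ge> 1 - \<delta>'"
proof -
  interpret stopped_loss_estimation M F T \<tau> X r mu ell gam \<gamma>'
    by (rule stopped_loss_estimation.intro[OF prob filt stopped_loss_estimation_axioms.intro])
      (fact assms)+
  have "{w \<in> space M. cum_loss_est X r mu gam (\<tau> w) w - cum_loss ell (\<tau> w) w \<le> ln (1 / \<delta>') / (2 * \<gamma>')}
      = {w \<in> space M. excess T w \<le> ln (1 / \<delta>') / (2 * \<gamma>')}"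
    using excess_eq_cum_loss_diff by auto
  then show ?thesis
    using prob_excess_le[OF \<delta>'(1)] by simp
qed

end
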